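(* For every $h\in R$, the binary representation of $h$ does not contain $11$ as a contiguous substring.
   Context: Stern's sequence $(a(n))_{n\ge0}$: $a(0)=0$, $a(1)=1$, $a(2n)=a(n)$, $a(2n+1)=a(n)+a(n+1)$; $s(n)=a(n+1)$ for $n\ge0$. $R$ is the set of record-setters of $s$, i.e. indices $v\ge0$ with $s(i)<s(v)$ for all $i<v$. The binary representation of a positive integer has no leading zeros; $0$ is represented by the string $0$. *)

theory Defs
  imports Main "HOL-Library.Sublist"
begin

function stern :: "nat \<Rightarrow> nat" where
  "stern n = (if n = 0 then 0 else if n = 1 then 1
              else if even n then stern (n div 2)
              else stern (n div 2) + stern (n div 2 + 1))"
  by pat_completeness auto
termination by (relation "measure id") (auto elim!: oddE)

definition s :: "nat \<Rightarrow> nat" where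
  "s n = stern (n + 1)"

definition R :: "nat set" where
  "R = {v. \<forall>i<v. s i < s v}"

fun bin_aux :: "nat \<Rightarrow> nat list" where
  "bin_aux n = (if n = 0 then [] else bin_aux (n div 2) @ [n mod 2])"

definition bin :: "nat \<Rightarrow> nat list" where
  "bin n = (if n = 0 then [0] else bin_aux n)"

end

theory Submission
  imports Defs
begin

text \<open>Reading the binary word of \<open>n\<close> from the left, the pair \<open>(a(n), a(n+1))\<close> is the
bottom row of the product of the matrices \<open>[[1,1],[0,1]]\<close> (bit 0) and \<open>[[1,0],[1,1]]\<close>
(bit 1) along the word. Hence if a factor of the word can be replaced by a word of the same
length and smaller value whose matrix dominates entrywise, the resulting smaller index has an
\<open>s\<close>-value at least as large, and \<open>n\<close> is not a record-setter; for a suffix it suffices to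
compare right columns. Odd numbers are never record-setters, and scanning an even binary word
from an occurrence of 11 one always meets one of the replaceable factors \<open>111 \<mapsto> 101\<close>,
\<open>110(10)\<^sup>j0 \<mapsto> 1010(10)\<^sup>j\<close>, or the suffix \<open>110(10)\<^sup>k \<mapsto> 10(10)\<^sup>k0\<close>.\<close>

declare stern.simps [simp del] bin_aux.simps [simp del]

lemma stern_0 [simp]: "stern 0 = 0"
  by (subst stern.simps) simp

lemma stern_Suc_0 [simp]: "stern (Suc 0) = Suc 0"
  by (subst stern.simps) simp

lemma stern_double [simp]: "stern (2 * n) = stern n"
  by (cases "n = 0") (simp, subst stern.simps, simp)

lemma stern_Suc_double: "stern (Suc (2 * n)) = stern n + stern (Suc n)"
  by (cases "n = 0") (simp, subst stern.simps, simp)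

lemma stern_Suc_Suc_double: "stern (Suc (Suc (2 * n))) = stern (Suc n)"
  using stern_double [of "Suc n"] by simp

lemma record_setter_even:
  assumes "h \<in> R"
  shows "even h"
proof (rule ccontr)
  assume "odd h"
  then obtain m where h: "h = Suc (2 * m)"
    using oddE by fastforce
  then have "s m < s h"
    using assms by (simp add: R_def)
  then show False
    by (simp add: h s_def stern_Suc_Suc_double)
qed

definition bin_val :: "nat list \<Rightarrow> nat" where
  "bin_val w = foldl (\<lambda>n b. 2 * n + b) 0 w"

lemma bin_val_Nil [simp]: "bin_val [] = 0"
  by (simp add: bin_val_def)

lemma bin_val_snoc [simp]: "bin_val (w @ [b]) = 2 * bin_val w + b"
  by (simp add: bin_val_def)

lemma bin_val_append: "bin_val (u @ v) = bin_val u * 2 ^ length v + bin_val v"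
  by (induction v rule: rev_induct) (simp_all flip: append_assoc)

lemma bin_val_Cons: "bin_val (b # w) = b * 2 ^ length w + bin_val w"
  using bin_val_append [of "[b]" w] by (simp add: bin_val_def)

lemma bin_val_less_power: "set w \<subseteq> {0, 1} \<Longrightarrow> bin_val w < 2 ^ length w"
  by (induction w rule: rev_induct) auto

lemma bin_val_less_at_first_difference:
  assumes "length y = length x" and "set y \<subseteq> {0, 1}"
  shows "bin_val (u @ 0 # y) < bin_val (u @ 1 # x)"
  using bin_val_less_power [OF assms(2)] assms(1)
  by (simp add: bin_val_append [of u] bin_val_Cons)

lemma bin_aux_bits: "set (bin_aux n) \<subseteq> {0, 1}"
  by (induction n rule: bin_aux.induct) (subst bin_aux.simps, auto)

lemma bin_val_bin_aux: "bin_val (bin_aux n) = n"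
  by (induction n rule: bin_aux.induct) (subst bin_aux.simps, auto)

lemma last_bin_aux: "0 < n \<Longrightarrow> last (bin_aux n) = n mod 2"
  by (subst bin_aux.simps) simp

datatype mat2 = Mat2 (m11: nat) (m12: nat) (m21: nat) (m22: nat)

instantiation mat2 :: monoid_mult
begin

fun times_mat2 :: "mat2 \<Rightarrow> mat2 \<Rightarrow> mat2" where
  "Mat2 a b c d * Mat2 a' b' c' d' =
     Mat2 (a * a' + b * c') (a * b' + b * d') (c * a' + d * c') (c * b' + d * d')"

definition one_mat2 :: mat2 where
  "1 = Mat2 1 0 0 1"

instance
proof
  fix A B C :: mat2
  show "A * B * C = A * (B * C)"
    by (cases A; cases B; cases C) (simp add: algebra_simps)
  show "1 * A = A" "A * 1 = A"
    by (cases A; simp add: one_mat2_def)+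
qed

end

instantiation mat2 :: order
begin

definition less_eq_mat2 :: "mat2 \<Rightarrow> mat2 \<Rightarrow> bool" where
  "A \<le> B \<longleftrightarrow> m11 A \<le> m11 B \<and> m12 A \<le> m12 B \<and> m21 A \<le> m21 B \<and> m22 A \<le> m22 B"

definition less_mat2 :: "mat2 \<Rightarrow> mat2 \<Rightarrow> bool" where
  "(A :: mat2) < B \<longleftrightarrow> A \<le> B \<and> \<not> B \<le> A"

instance
  by standard (auto simp: less_eq_mat2_def less_mat2_def intro: mat2.expand)

end

lemma mat2_mult_right_mono: "A \<le> B \<Longrightarrow> A * C \<le> B * C" for A B C :: mat2
  by (cases A; cases B; cases C) (auto simp: less_eq_mat2_def intro!: add_mono)

definition bit_mat :: "nat \<Rightarrow> mat2" where
  "bit_mat b = (if b = 0 then Mat2 1 1 0 1 else Mat2 1 0 1 1)"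

definition word_mat :: "nat list \<Rightarrow> mat2" where
  "word_mat w = prod_list (map bit_mat w)"

lemma word_mat_append: "word_mat (u @ v) = word_mat u * word_mat v"
  by (simp add: word_mat_def)

lemma stern_word_mat:
  "set w \<subseteq> {0, 1} \<Longrightarrow>
     m21 (word_mat w) = stern (bin_val w) \<and> m22 (word_mat w) = stern (Suc (bin_val w))"
proof (induction w rule: rev_induct)
  case Nil
  show ?case
    by (simp add: word_mat_def one_mat2_def)
next
  case (snoc b w)
  then have "m21 (word_mat w) = stern (bin_val w)" "m22 (word_mat w) = stern (Suc (bin_val w))"
    and b: "b = 0 \<or> b = 1"
    by auto
  then obtain a c where "word_mat w = Mat2 a c (stern (bin_val w)) (stern (Suc (bin_val w)))"
    by (metis mat2.collapse)
  then have "word_mat (w @ [b]) = Mat2 a c (stern (bin_val w)) (stern (Suc (bin_val w))) * bit_mat b"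
    by (simp add: word_mat_append word_mat_def)
  with b show ?case
    by (auto simp: bit_mat_def stern_Suc_double stern_Suc_Suc_double)
qed

text \<open>By \<open>stern_word_mat\<close>, \<open>s (bin_val (p @ w))\<close> is the bottom row of \<open>word_mat p\<close> applied
to the right column of \<open>word_mat w\<close>.\<close>

definition beaten :: "nat list \<Rightarrow> bool" where
  "beaten w \<longleftrightarrow> (\<exists>v. set v \<subseteq> {0, 1} \<and> length v = length w \<and> bin_val v < bin_val w \<and>
     m12 (word_mat w) \<le> m12 (word_mat v) \<and> m22 (word_mat w) \<le> m22 (word_mat v))"

lemma beaten_not_record_setter:
  assumes "beaten w" and "set w \<subseteq> {0, 1}"
  shows "bin_val w \<notin> R"
proof
  assume "bin_val w \<in> R"
  obtain v where v: "set v \<subseteq> {0, 1}" "bin_val v < bin_val w" "m22 (word_mat w) \<le> m22 (word_mat v)"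
    using assms(1) by (auto simp: beaten_def)
  with \<open>bin_val w \<in> R\<close> have "s (bin_val v) < s (bin_val w)"
    by (simp add: R_def)
  with v assms(2) show False
    by (simp add: s_def stern_word_mat)
qed

lemma beaten_append_left:
  assumes "beaten w" and "set p \<subseteq> {0, 1}"
  shows "beaten (p @ w)"
proof -
  obtain v where v: "set v \<subseteq> {0, 1}" "length v = length w" "bin_val v < bin_val w"
    "m12 (word_mat w) \<le> m12 (word_mat v)" "m22 (word_mat w) \<le> m22 (word_mat v)"
    using assms(1) by (auto simp: beaten_def)
  have "bin_val (p @ v) < bin_val (p @ w)"
    using v(2,3) by (simp add: bin_val_append)
  moreover have "m12 (word_mat (p @ w)) \<le> m12 (word_mat (p @ v))"
    and "m22 (word_mat (p @ w)) \<le> m22 (word_mat (p @ v))"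
    using v(4,5) by (cases "word_mat p"; cases "word_mat v"; cases "word_mat w";
        auto simp: word_mat_append intro!: add_mono)+
  ultimately show ?thesis
    using v(1,2) assms(2) unfolding beaten_def by (intro exI [of _ "p @ v"]) auto
qed

lemma beaten_append_right:
  assumes "set v \<subseteq> {0, 1}" "length v = length w" "bin_val v < bin_val w"
    and "word_mat w \<le> word_mat v" and "set y \<subseteq> {0, 1}"
  shows "beaten (w @ y)"
proof -
  have "bin_val (v @ y) < bin_val (w @ y)"
    using assms(2,3) by (simp add: bin_val_append)
  moreover have "word_mat (w @ y) \<le> word_mat (v @ y)"
    using assms(4) by (simp add: word_mat_append mat2_mult_right_mono)
  ultimately show ?thesis
    using assms unfolding beaten_def less_eq_mat2_def by (intro exI [of _ "v @ y"]) auto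
qed

definition tens :: "nat \<Rightarrow> nat list" where
  "tens k = concat (replicate k [1, 0])"

lemma tens_0 [simp]: "tens 0 = []"
  by (simp add: tens_def)

lemma tens_Suc: "tens (Suc k) = tens k @ [1, 0]"
  by (simp add: tens_def flip: replicate_append_same)

lemma tens_Suc_Cons: "tens (Suc k) = 1 # 0 # tens k"
  by (simp add: tens_def)

lemma length_tens [simp]: "length (tens k) = 2 * k"
  by (induction k) (simp_all add: tens_Suc_Cons)

lemma set_tens: "set (tens k) \<subseteq> {0, 1}"
  by (simp add: tens_def)

lemma word_mat_tens: "\<exists>a b. word_mat (tens k) = Mat2 a b b (a + b)"
proof (induction k)
  case 0
  show ?case
    by (simp add: word_mat_def one_mat2_def)
next
  case (Suc k)
  then obtain a b where "word_mat (tens k) = Mat2 a b b (a + b)"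
    by blast
  then have "word_mat (tens (Suc k)) = Mat2 (a + b) (a + 2 * b) (a + 2 * b) (2 * a + 3 * b)"
    by (simp add: tens_Suc_Cons word_mat_append word_mat_def bit_mat_def)
  then show ?case
    by (intro exI [of _ "a + b"] exI [of _ "a + 2 * b"]) simp
qed

lemma beaten_111: "set y \<subseteq> {0, 1} \<Longrightarrow> beaten ([1, 1, 1] @ y)"
  by (rule beaten_append_right [of "[1, 0, 1]"])
    (simp_all add: bin_val_def word_mat_def bit_mat_def less_eq_mat2_def)

lemma beaten_one_tens_zero:
  assumes "set y \<subseteq> {0, 1}"
  shows "beaten ([1] @ tens (Suc j) @ 0 # y)"
proof -
  have "beaten (([1] @ tens (Suc j) @ [0]) @ y)"
  proof (rule beaten_append_right [of "[1, 0] @ tens (Suc j)"])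
    obtain a b where "word_mat (tens j) = Mat2 a b b (a + b)"
      using word_mat_tens by blast
    then show "word_mat ([1] @ tens (Suc j) @ [0]) \<le> word_mat ([1, 0] @ tens (Suc j))"
      by (simp add: tens_Suc_Cons word_mat_append word_mat_def bit_mat_def less_eq_mat2_def)
    show "bin_val ([1, 0] @ tens (Suc j)) < bin_val ([1] @ tens (Suc j) @ [0])"
      using bin_val_less_at_first_difference [of "[1, 0] @ tens j" "0 # tens j @ [0]" "[1]"]
        set_tens [of j]
      by (simp add: tens_Suc_Cons)
  qed (use assms set_tens [of "Suc j"] in simp_all)
  then show ?thesis
    by simp
qed

lemma beaten_one_tens: "beaten ([1] @ tens (Suc k))"
proof -
  obtain a b where "word_mat (tens k) = Mat2 a b b (a + b)"
    using word_mat_tens by blast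
  then have "m12 (word_mat ([1] @ tens (Suc k))) \<le> m12 (word_mat ([1, 0] @ tens k @ [0]))"
    and "m22 (word_mat ([1] @ tens (Suc k))) \<le> m22 (word_mat ([1, 0] @ tens k @ [0]))"
    by (simp_all add: tens_Suc_Cons word_mat_append word_mat_def bit_mat_def)
  moreover have "bin_val ([1, 0] @ tens k @ [0]) < bin_val ([1] @ tens (Suc k))"
    using bin_val_less_at_first_difference [of "tens k @ [0]" "0 # tens k" "[1]"] set_tens [of k]
    by (simp add: tens_Suc_Cons)
  ultimately show ?thesis
    unfolding beaten_def using set_tens [of k]
    by (intro exI [of _ "[1, 0] @ tens k @ [0]"]) (auto simp: tens_Suc_Cons)
qed

lemma beaten_one_tens_one:
  assumes "set v \<subseteq> {0, 1}" and "v \<noteq> []" and "last v = 0"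
  shows "beaten ([1] @ tens k @ [1] @ v)"
  using assms
proof (induction "length v" arbitrary: k v rule: less_induct)
  case less
  obtain b v' where v: "v = b # v'" and b: "b = 0 \<or> b = 1"
    using less.prems by (cases v) auto
  have v': "set v' \<subseteq> {0, 1}" "v' \<noteq> [] \<Longrightarrow> last v' = 0"
    using less.prems by (auto simp: v)
  show ?case
  proof (cases "b = 0")
    case b0: True
    show ?thesis
    proof (cases v')
      case Nil
      then show ?thesis
        using beaten_one_tens [of k] by (simp add: v b0 tens_Suc)
    next
      case (Cons c v'')
      have v'': "set v'' \<subseteq> {0, 1}" "c = 0 \<or> c = 1"
        using v' by (auto simp: Cons)
      show ?thesis
      proof (cases "c = 0")
        case True
        then show ?thesis
          using beaten_one_tens_zero [OF v''(1), of k] by (simp add: v Cons b0 tens_Suc)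
      next
        case False
        then have "v'' \<noteq> []" "last v'' = 0"
          using v' v''(2) by (auto simp: Cons split: if_splits)
        with v'' have "beaten ([1] @ tens (Suc k) @ [1] @ v'')"
          by (intro less.hyps) (simp_all add: v Cons)
        with False v''(2) show ?thesis
          by (simp add: v Cons b0 tens_Suc)
      qed
    qed
  next
    case False
    with b have b1: "b = 1" by simp
    with less.prems have "v' \<noteq> []"
      by (auto simp: v)
    show ?thesis
    proof (cases k)
      case 0
      then show ?thesis
        using beaten_111 [OF v'(1)] by (simp add: v b1)
    next
      case (Suc k')
      have "beaten ([1] @ tens 0 @ [1] @ v')"
        using \<open>v' \<noteq> []\<close> v' by (intro less.hyps) (simp_all add: v)
      then have "beaten (([1] @ tens (Suc k')) @ [1] @ tens 0 @ [1] @ v')"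
        by (rule beaten_append_left) (use set_tens [of "Suc k'"] in auto)
      then show ?thesis
        by (simp add: v b1 Suc tens_Suc)
    qed
  qed
qed

theorem mainTheorem6:
  assumes "h \<in> R"
  shows "\<not> sublist [1, 1] (bin h)"
proof
  assume "sublist [1, 1] (bin h)"
  then have "h \<noteq> 0"
    by (auto simp: bin_def sublist_Cons_right split: if_splits)
  then have w: "bin h = bin_aux h" "last (bin_aux h) = 0"
    using record_setter_even [OF assms] by (simp_all add: bin_def last_bin_aux)
  with \<open>sublist [1, 1] (bin h)\<close> obtain u v where uv: "bin_aux h = u @ [1, 1] @ v"
    by (auto simp: sublist_def)
  with w(2) have "v \<noteq> []" "last v = 0"
    by (auto split: if_splits)
  moreover have "set u \<subseteq> {0, 1}" "set v \<subseteq> {0, 1}"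
    using bin_aux_bits [of h] by (auto simp: uv)
  ultimately have "beaten (bin_aux h)"
    using beaten_one_tens_one [of v 0] beaten_append_left [of _ u] by (simp add: uv)
  then have "bin_val (bin_aux h) \<notin> R"
    using beaten_not_record_setter bin_aux_bits by blast
  with assms show False
    by (simp add: bin_val_bin_aux)
qed

end
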